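(* Let $c^{(k)}$ be an admissible control, $\rho^{(k)}$ the corresponding solution of the master equation and $\chi^{(k)}$ the solution of the adjoint system with control $c^{(k)}$. Let $c^{(k+1)}=(u^{(k+1)},n_1^{(k+1)},n_2^{(k+1)})$ be an admissible control and $\rho^{(k+1)}$ the solution of the master equation with control $c^{(k+1)}$ such that for every $t\in[0,T]$: $u^{(k+1)}(t)\in\arg\max_{|u|\le\mu}\mathcal K^u(\chi^{(k)}(t),\rho^{(k+1)}(t))\,u$ and $n_j^{(k+1)}(t)\in\arg\max_{n_j\in[0,n_{\max}]}\mathcal K^{n_j}(\chi^{(k)}(t),\rho^{(k+1)}(t))\,n_j$, $j=1,2$ (i.e. $u^{(k+1)}(t)=\pm\mu$ according to the sign of $\mathcal K^u$, $n_j^{(k+1)}(t)=0$ or $n_{\max}$ according to the sign of $\mathcal K^{n_j}$, arbitrary in the admissible range where the switching function vanishes). Then $\langle\mathcal K^c(\chi^{(k)}(t),\rho^{(k+1)}(t)),c^{(k+1)}(t)-c^{(k)}(t)\rangle\ge0$ for all $t\in[0,T]$ and $J_1(c^{(k+1)})\ge J_1(c^{(k)})$. Moreover $J_1(c^{(k+1)})>J_1(c^{(k)})$ if at least one of the sets $\{t: u^{(k+1)}(t)\ne u^{(k)}(t),\ \mathcal K^u(\chi^{(k)}(t),\rho^{(k+1)}(t))\ne0\}$, $\{t: n_j^{(k+1)}(t)\ne n_j^{(k)}(t),\ \mathcal K^{n_j}(\chi^{(k)}(t),\rho^{(k+1)}(t))\ne0\}$ ($j=1,2$) has positive Lebesgue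 measure.
   Context: Let $\sigma_x,\sigma_y,\sigma_z$ be the Pauli matrices, $\mathbb I_2,\mathbb I_4$ identity matrices, $\sigma^+=\begin{pmatrix}0&0\\1&0\end{pmatrix}$, $\sigma^-=\begin{pmatrix}0&1\\0&0\end{pmatrix}$, $\sigma_1^\pm=\sigma^\pm\otimes\mathbb I_2$, $\sigma_2^\pm=\mathbb I_2\otimes\sigma^\pm$, $W_1=\sigma_z\otimes\mathbb I_2$, $W_2=\mathbb I_2\otimes\sigma_z$. Fix parameters $\varepsilon,\omega_j,\Lambda_j,\Omega_j>0$ ($j=1,2$), $H_0=\frac{\omega_1}{2}W_1+\frac{\omega_2}{2}W_2$, and a Hermitian $4\times4$ matrix $V$ (in the paper $V=Q_1\otimes\mathbb I_2+\mathbb I_2\otimes Q_2$ or $V=Q_1\otimes Q_2$ with $Q_j=\sin\theta_j\cos\varphi_j\sigma_x+\sin\theta_j\sin\varphi_j\sigma_y+\cos\theta_j\sigma_z$). For $c=(u,n_1,n_2)\in\mathbb R^3$ let $H_c=H_0+\varepsilon\sum_{j=1}^2\Lambda_j n_jW_j+uV$ and $$\mathcal L^D_n(\rho)=\sum_{j=1}^2\Big[\Omega_j(n_j+1)\big(2\sigma_j^-\rho\sigma_j^+-\{\sigma_j^+\sigma_j^-,\rho\}\big)+\Omega_jn_j\big(2\sigma_j^+\rho\sigma_j^--\{\sigma_j^-\sigma_j^+,\rho\}\big)\Big],$$ $$\mathcal L^{D,\dagger}_n(\chi)=\sum_{j=1}^2\Big[\Omega_j(n_j+1)\big(2\sigma_j^+\chi\sigma_j^--\{\sigma_j^+\sigma_j^-,\chi\}\big)+\Omega_jn_j\big(2\sigma_j^-\chi\sigma_j^+-\{\sigma_j^-\sigma_j^+,\chi\}\big)\Big],$$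 where $\{A,B\}=AB+BA$, $[A,B]=AB-BA$. Fix $T>0$, $\mu,n_{\max}>0$, $Q=[-\mu,\mu]\times[0,n_{\max}]^2$; admissible controls are piecewise continuous $c=(u,n_1,n_2):[0,T]\to Q$. Fix density matrices $\rho_0,\rho_{\rm target}$ ($4\times 4$, positive semidefinite, trace one). The master equation is $\dot\rho(t)=-i[H_{c(t)},\rho(t)]+\varepsilon\mathcal L^D_{n(t)}(\rho(t))$, $\rho(0)=\rho_0$; the adjoint system is $\dot\chi(t)=-i[H_{c(t)},\chi(t)]-\varepsilon\mathcal L^{D,\dagger}_{n(t)}(\chi(t))$, $\chi(T)=\rho_{\rm target}$ (solved backward). For matrices, $\langle A,B\rangle={\rm Tr}(A^\dagger B)$. The objective is $J_1(c)={\rm Tr}(\rho(T)\rho_{\rm target})$ where $\rho$ solves the master equation with control $c$. The switching functions $\mathcal K^c=(\mathcal K^u,\mathcal K^{n_1},\mathcal K^{n_2})$ are the coefficients of $u,n_1,n_2$ in $\langle\chi,-i[H_c,\rho]+\varepsilon\mathcal L^D_n(\rho)\rangle$: $\mathcal K^u(\chi,\rho)=\langle\chi,-i[V,\rho]\rangle$, $\mathcal K^{n_j}(\chi,\rho)=\big\langle\chi,-i\varepsilon\Lambda_j[W_j,\rho]+\varepsilon\Omega_j\big(2\sigma_j^-\rho\sigma_j^++2\sigma_j^+\rho\sigma_j^--2\rho\big)\big\rangle$, $j=1,2$ (real for Hermitian $\chi,\rho$). *)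

theory Defs
  imports "HOL-Analysis.Analysis"
begin

type_synonym mat2 = "complex^2^2"
text \<open>4x4 matrices, indexed by pairs (tensor product index of C^2 (x) C^2).\<close>
type_synonym mat4 = "complex^(2 \<times> 2)^(2 \<times> 2)"

definition mat2_of :: "complex \<Rightarrow> complex \<Rightarrow> complex \<Rightarrow> complex \<Rightarrow> mat2" where
  "mat2_of a b c d = vector [vector [a, b], vector [c, d]]"

definition sigma_x :: mat2 where "sigma_x = mat2_of 0 1 1 0"
definition sigma_y :: mat2 where "sigma_y = mat2_of 0 (-\<i>) \<i> 0"
definition sigma_z :: mat2 where "sigma_z = mat2_of 1 0 0 (-1)"
definition sigma_plus :: mat2 where "sigma_plus = mat2_of 0 0 1 0"
definition sigma_minus :: mat2 where "sigma_minus = mat2_of 0 1 0 0"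

definition kron :: "mat2 \<Rightarrow> mat2 \<Rightarrow> mat4" where
  "kron A B = (\<chi> p q. A $ fst p $ fst q * B $ snd p $ snd q)"

definition I2 :: mat2 where "I2 = mat 1"

definition sigma_p :: "nat \<Rightarrow> mat4" where
  "sigma_p j = (if j = 1 then kron sigma_plus I2 else kron I2 sigma_plus)"
definition sigma_m :: "nat \<Rightarrow> mat4" where
  "sigma_m j = (if j = 1 then kron sigma_minus I2 else kron I2 sigma_minus)"
definition W :: "nat \<Rightarrow> mat4" where
  "W j = (if j = 1 then kron sigma_z I2 else kron I2 sigma_z)"

definition csmul :: "complex \<Rightarrow> mat4 \<Rightarrow> mat4" where
  "csmul c A = (\<chi> i j. c * A $ i $ j)"
definition adj :: "mat4 \<Rightarrow> mat4" where
  "adj A = (\<chi> i j. cnj (A $ j $ i))"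
definition comm :: "mat4 \<Rightarrow> mat4 \<Rightarrow> mat4" where
  "comm A B = A ** B - B ** A"
definition acomm :: "mat4 \<Rightarrow> mat4 \<Rightarrow> mat4" where
  "acomm A B = A ** B + B ** A"

definition hs_inner :: "mat4 \<Rightarrow> mat4 \<Rightarrow> complex" where
  "hs_inner A B = trace (adj A ** B)"

definition hermitian :: "mat4 \<Rightarrow> bool" where
  "hermitian A \<longleftrightarrow> adj A = A"

definition psd :: "mat4 \<Rightarrow> bool" where
  "psd A \<longleftrightarrow> hermitian A \<and>
     (\<forall>x :: complex^(2\<times>2). 0 \<le> Re (\<Sum>i\<in>UNIV. \<Sum>j\<in>UNIV. cnj (x $ i) * A $ i $ j * x $ j))"

definition density_matrix :: "mat4 \<Rightarrow> bool" where
  "density_matrix A \<longleftrightarrow> psd A \<and> trace A = 1"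

text \<open>Controls are triples c = (u, n_1, n_2). Parameters omega, Lambda, Omega are
  indexed by j \<in> {1,2}.\<close>

definition H0 :: "(nat \<Rightarrow> real) \<Rightarrow> mat4" where
  "H0 \<omega> = (\<omega> 1 / 2) *\<^sub>R W 1 + (\<omega> 2 / 2) *\<^sub>R W 2"

definition Hc :: "real \<Rightarrow> (nat \<Rightarrow> real) \<Rightarrow> (nat \<Rightarrow> real) \<Rightarrow> mat4 \<Rightarrow> real \<times> real \<times> real \<Rightarrow> mat4" where
  "Hc \<epsilon> \<omega> \<Lambda> V c = (case c of (u, n1, n2) \<Rightarrow>
      H0 \<omega> + \<epsilon> *\<^sub>R ((\<Lambda> 1 * n1) *\<^sub>R W 1 + (\<Lambda> 2 * n2) *\<^sub>R W 2) + u *\<^sub>R V)"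

definition LD_j :: "(nat \<Rightarrow> real) \<Rightarrow> nat \<Rightarrow> real \<Rightarrow> mat4 \<Rightarrow> mat4" where
  "LD_j \<Omega> j n \<rho> =
     (\<Omega> j * (n + 1)) *\<^sub>R (2 *\<^sub>R (sigma_m j ** \<rho> ** sigma_p j) - acomm (sigma_p j ** sigma_m j) \<rho>)
   + (\<Omega> j * n) *\<^sub>R (2 *\<^sub>R (sigma_p j ** \<rho> ** sigma_m j) - acomm (sigma_m j ** sigma_p j) \<rho>)"

definition LD :: "(nat \<Rightarrow> real) \<Rightarrow> real \<times> real \<times> real \<Rightarrow> mat4 \<Rightarrow> mat4" where
  "LD \<Omega> c \<rho> = (case c of (u, n1, n2) \<Rightarrow> LD_j \<Omega> 1 n1 \<rho> + LD_j \<Omega> 2 n2 \<rho>)"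

definition LD_adj_j :: "(nat \<Rightarrow> real) \<Rightarrow> nat \<Rightarrow> real \<Rightarrow> mat4 \<Rightarrow> mat4" where
  "LD_adj_j \<Omega> j n X =
     (\<Omega> j * (n + 1)) *\<^sub>R (2 *\<^sub>R (sigma_p j ** X ** sigma_m j) - acomm (sigma_p j ** sigma_m j) X)
   + (\<Omega> j * n) *\<^sub>R (2 *\<^sub>R (sigma_m j ** X ** sigma_p j) - acomm (sigma_m j ** sigma_p j) X)"

definition LD_adj :: "(nat \<Rightarrow> real) \<Rightarrow> real \<times> real \<times> real \<Rightarrow> mat4 \<Rightarrow> mat4" where
  "LD_adj \<Omega> c X = (case c of (u, n1, n2) \<Rightarrow> LD_adj_j \<Omega> 1 n1 X + LD_adj_j \<Omega> 2 n2 X)"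

definition master_rhs ::
  "real \<Rightarrow> (nat \<Rightarrow> real) \<Rightarrow> (nat \<Rightarrow> real) \<Rightarrow> (nat \<Rightarrow> real) \<Rightarrow> mat4 \<Rightarrow> real \<times> real \<times> real \<Rightarrow> mat4 \<Rightarrow> mat4" where
  "master_rhs \<epsilon> \<omega> \<Lambda> \<Omega> V c \<rho> = csmul (-\<i>) (comm (Hc \<epsilon> \<omega> \<Lambda> V c) \<rho>) + \<epsilon> *\<^sub>R LD \<Omega> c \<rho>"

definition adjoint_rhs ::
  "real \<Rightarrow> (nat \<Rightarrow> real) \<Rightarrow> (nat \<Rightarrow> real) \<Rightarrow> (nat \<Rightarrow> real) \<Rightarrow> mat4 \<Rightarrow> real \<times> real \<times> real \<Rightarrow> mat4 \<Rightarrow> mat4" where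
  "adjoint_rhs \<epsilon> \<omega> \<Lambda> \<Omega> V c X = csmul (-\<i>) (comm (Hc \<epsilon> \<omega> \<Lambda> V c) X) - \<epsilon> *\<^sub>R LD_adj \<Omega> c X"

definition piecewise_continuous_on :: "real \<Rightarrow> real \<Rightarrow> (real \<Rightarrow> 'a::topological_space) \<Rightarrow> bool" where
  "piecewise_continuous_on a b f \<longleftrightarrow>
     (\<exists>S. finite S \<and> continuous_on ({a..b} - S) f \<and>
        (\<forall>s\<in>S. (a < s \<longrightarrow> (\<exists>l. (f \<longlongrightarrow> l) (at_left s))) \<and>
                (s < b \<longrightarrow> (\<exists>l. (f \<longlongrightarrow> l) (at_right s)))))"

definition control_set :: "real \<Rightarrow> real \<Rightarrow> (real \<times> real \<times> real) set" where
  "control_set \<mu> nmax = {-\<mu>..\<mu>} \<times> {0..nmax} \<times> {0..nmax}"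

definition admissible :: "real \<Rightarrow> real \<Rightarrow> real \<Rightarrow> (real \<Rightarrow> real \<times> real \<times> real) \<Rightarrow> bool" where
  "admissible T \<mu> nmax c \<longleftrightarrow>
     piecewise_continuous_on 0 T c \<and> (\<forall>t\<in>{0..T}. c t \<in> control_set \<mu> nmax)"

text \<open>(Carath\'eodory) solution on [0,T]: continuous, satisfying the ODE at all but
  finitely many times (the switching times of the piecewise continuous control).\<close>
definition master_solution ::
  "real \<Rightarrow> (nat \<Rightarrow> real) \<Rightarrow> (nat \<Rightarrow> real) \<Rightarrow> (nat \<Rightarrow> real) \<Rightarrow> mat4 \<Rightarrow> real \<Rightarrow> mat4
   \<Rightarrow> (real \<Rightarrow> real \<times> real \<times> real) \<Rightarrow> (real \<Rightarrow> mat4) \<Rightarrow> bool" where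
  "master_solution \<epsilon> \<omega> \<Lambda> \<Omega> V T \<rho>0 c \<rho> \<longleftrightarrow>
     continuous_on {0..T} \<rho> \<and> \<rho> 0 = \<rho>0 \<and>
     (\<exists>S. finite S \<and> (\<forall>t\<in>{0..T} - S.
        (\<rho> has_vector_derivative master_rhs \<epsilon> \<omega> \<Lambda> \<Omega> V (c t) (\<rho> t)) (at t within {0..T})))"

definition adjoint_solution ::
  "real \<Rightarrow> (nat \<Rightarrow> real) \<Rightarrow> (nat \<Rightarrow> real) \<Rightarrow> (nat \<Rightarrow> real) \<Rightarrow> mat4 \<Rightarrow> real \<Rightarrow> mat4
   \<Rightarrow> (real \<Rightarrow> real \<times> real \<times> real) \<Rightarrow> (real \<Rightarrow> mat4) \<Rightarrow> bool" where
  "adjoint_solution \<epsilon> \<omega> \<Lambda> \<Omega> V T \<rho>target c X \<longleftrightarrow>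
     continuous_on {0..T} X \<and> X T = \<rho>target \<and>
     (\<exists>S. finite S \<and> (\<forall>t\<in>{0..T} - S.
        (X has_vector_derivative adjoint_rhs \<epsilon> \<omega> \<Lambda> \<Omega> V (c t) (X t)) (at t within {0..T})))"

text \<open>J_1 evaluated on the state trajectory rho of control c: Tr(rho(T) rho_target)
  (real for Hermitian matrices; we take the real part).\<close>
definition J1 :: "real \<Rightarrow> mat4 \<Rightarrow> (real \<Rightarrow> mat4) \<Rightarrow> real" where
  "J1 T \<rho>target \<rho> = Re (trace (\<rho> T ** \<rho>target))"

definition K_u :: "mat4 \<Rightarrow> mat4 \<Rightarrow> mat4 \<Rightarrow> real" where
  "K_u V X \<rho> = Re (hs_inner X (csmul (-\<i>) (comm V \<rho>)))"

definition K_n :: "real \<Rightarrow> (nat \<Rightarrow> real) \<Rightarrow> (nat \<Rightarrow> real) \<Rightarrow> nat \<Rightarrow> mat4 \<Rightarrow> mat4 \<Rightarrow> real" where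
  "K_n \<epsilon> \<Lambda> \<Omega> j X \<rho> = Re (hs_inner X
      (csmul (-\<i> * \<epsilon> * \<Lambda> j) (comm (W j) \<rho>)
       + (\<epsilon> * \<Omega> j) *\<^sub>R (2 *\<^sub>R (sigma_m j ** \<rho> ** sigma_p j) + 2 *\<^sub>R (sigma_p j ** \<rho> ** sigma_m j) - 2 *\<^sub>R \<rho>)))"

definition K_c :: "real \<Rightarrow> (nat \<Rightarrow> real) \<Rightarrow> (nat \<Rightarrow> real) \<Rightarrow> mat4 \<Rightarrow> mat4 \<Rightarrow> mat4 \<Rightarrow> real \<times> real \<times> real" where
  "K_c \<epsilon> \<Lambda> \<Omega> V X \<rho> = (K_u V X \<rho>, K_n \<epsilon> \<Lambda> \<Omega> 1 X \<rho>, K_n \<epsilon> \<Lambda> \<Omega> 2 X \<rho>)"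

end

theory Submission
  imports Defs
begin

(* The adjoint system is dual to the master equation for the real Hilbert-Schmidt pairing:
   if rho is driven by a control d and chi by a control c, then Re <chi(t), rho(t)> has
   derivative <K^c(chi, rho), d - c>, because the right-hand side of the master equation is
   affine in the control with the switching functions as coefficients.  For d = c the pairing
   is conserved, which turns J_1(c^(k)) into Re <chi^(k)(0), rho_0>; for d = c^(k+1) the
   pointwise argmax condition makes the derivative nonnegative, so J_1(c^(k+1)) - J_1(c^(k))
   is the increase of a nondecreasing function.  If that increase is zero, the derivative
   vanishes outside the finitely many exceptional times, so every switching set is finite
   and hence Lebesgue-null. *)

lemma has_integral_derivative_cofinite:
  fixes f :: "real \<Rightarrow> 'a::banach"
  assumes "finite S" "a \<le> b" "continuous_on {a..b} f"
    and "\<And>t. t \<in> {a..b} - S \<Longrightarrow> (f has_vector_derivative f' t) (at t within {a..b})"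
  shows "(f' has_integral (f b - f a)) {a..b}"
proof (rule fundamental_theorem_of_calculus_interior_strong[OF assms(1,2) _ assms(3)])
  fix t
  assume "t \<in> {a<..<b} - S"
  then have "t \<in> {a..b} - S" and "at t within {a..b} = at t"
    using at_within_Icc_at[of a t b] by auto
  then show "(f has_vector_derivative f' t) (at t)"
    using assms(4) by metis
qed

lemma mono_on_derivative_nonneg_cofinite:
  fixes f :: "real \<Rightarrow> real"
  assumes "finite S" "continuous_on {a..b} f"
    and "\<And>t. t \<in> {a..b} - S \<Longrightarrow> (f has_vector_derivative f' t) (at t within {a..b})"
    and "\<And>t. t \<in> {a..b} - S \<Longrightarrow> 0 \<le> f' t"
  shows "mono_on {a..b} f"
proof (rule mono_onI)
  fix x y
  assume xy: "x \<in> {a..b}" "y \<in> {a..b}" "x \<le> y"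
  then have sub: "{x..y} \<subseteq> {a..b}"
    by auto
  \<comment> \<open>\<open>f'\<close> is only known to be nonnegative off \<open>S\<close>, so integrate a version vanishing on \<open>S\<close>.\<close>
  define g where "g t = (if t \<in> S then 0 else f' t)" for t
  have "(g has_integral (f y - f x)) {x..y}"
  proof (rule has_integral_derivative_cofinite[OF assms(1) xy(3)])
    show "continuous_on {x..y} f"
      using continuous_on_subset[OF assms(2) sub] .
    fix t
    assume t: "t \<in> {x..y} - S"
    then have "t \<in> {a..b} - S"
      using sub by blast
    with t show "(f has_vector_derivative g t) (at t within {x..y})"
      using has_vector_derivative_within_subset[OF assms(3) sub] by (simp add: g_def)
  qed
  moreover have "0 \<le> g t" if "t \<in> {x..y}" for t
    using assms(4) sub that by (auto simp: g_def)
  ultimately have "0 \<le> f y - f x"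
    by (rule has_integral_nonneg)
  then show "f x \<le> f y"
    by simp
qed

lemma derivative_nonneg_cofinite_increment:
  fixes f :: "real \<Rightarrow> real"
  assumes "finite S" "a < b" "continuous_on {a..b} f"
    and deriv: "\<And>t. t \<in> {a..b} - S \<Longrightarrow> (f has_vector_derivative f' t) (at t within {a..b})"
    and "\<And>t. t \<in> {a..b} - S \<Longrightarrow> 0 \<le> f' t"
  shows "f a \<le> f b"
    and "f a = f b \<Longrightarrow> t \<in> {a..b} - S \<Longrightarrow> f' t = 0"
proof -
  have mono: "mono_on {a..b} f"
    using mono_on_derivative_nonneg_cofinite assms(1,3-5) by blast
  then show "f a \<le> f b"
    using \<open>a < b\<close> by (simp add: mono_onD)
  assume "f a = f b" and t: "t \<in> {a..b} - S"
  have const: "f s = f a" if "s \<in> {a..b}" for s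
  proof -
    have "f a \<le> f s" "f s \<le> f b"
      using mono_onD[OF mono] that \<open>a < b\<close> by auto
    then show ?thesis
      using \<open>f a = f b\<close> by linarith
  qed
  have ta: "t \<in> {a..b}"
    using t by blast
  have "(f has_vector_derivative 0) (at t within {a..b})"
  proof (rule has_vector_derivative_transform[OF ta])
    show "f s = f a" if "s \<in> {a..b}" for s
      using const[OF that] .
  qed (rule has_vector_derivative_const)
  then show "f' t = 0"
    using vector_derivative_unique_within_closed_interval[OF \<open>a < b\<close>, unfolded cbox_interval,
        OF ta deriv[OF t]] by blast
qed

lemma emeasure_lebesgue_nonvanishing_product:
  fixes k x y :: "real \<Rightarrow> real"
  assumes "finite S" "\<And>t. t \<in> A - S \<Longrightarrow> k t * (x t - y t) = 0"
  shows "emeasure lebesgue {t \<in> A. x t \<noteq> y t \<and> k t \<noteq> 0} = 0"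
proof -
  have "{t \<in> A. x t \<noteq> y t \<and> k t \<noteq> 0} \<subseteq> S"
    using assms(2) by auto
  then have "finite {t \<in> A. x t \<noteq> y t \<and> k t \<noteq> 0}"
    using assms(1) finite_subset by blast
  then show ?thesis
    by (intro null_setsD1 null_sets_completionI finite_imp_null_set_lborel)
qed

lemma is_arg_max_linear_gain:
  fixes k :: real
  assumes "is_arg_max (\<lambda>v. k * v) P v1" "P v0"
  shows "0 \<le> k * (v1 - v0)"
  using assms by (auto simp: is_arg_max_def right_diff_distrib not_less)

(* Entrywise form of real scaling; scaleR_conv_of_real would instead produce the
   componentwise embedding of_real :: real \<Rightarrow> mat4. *)
lemma scaleR_mat4_nth [simp]: "((r *\<^sub>R A) :: mat4) $ i $ j = of_real r * A $ i $ j"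
  by (simp add: scaleR_conv_of_real[where 'a=complex])

lemma adj_adj [simp]: "adj (adj A) = A"
  by (simp add: adj_def vec_eq_iff)

lemma adj_add [simp]: "adj (A + B) = adj A + adj B"
  by (simp add: adj_def vec_eq_iff)

lemma adj_diff [simp]: "adj (A - B) = adj A - adj B"
  by (simp add: adj_def vec_eq_iff)

lemma adj_scaleR [simp]: "adj (r *\<^sub>R A) = r *\<^sub>R adj A"
  by (simp add: adj_def vec_eq_iff)

lemma adj_csmul [simp]: "adj (csmul c A) = csmul (cnj c) (adj A)"
  by (simp add: adj_def csmul_def vec_eq_iff)

lemma adj_matrix_mul [simp]: "adj (A ** B) = adj B ** adj A"
  by (simp add: adj_def vec_eq_iff matrix_matrix_mult_def mult.commute)

lemma adj_sigma_p [simp]: "adj (sigma_p j) = sigma_m j"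
  by (auto simp: sigma_p_def sigma_m_def vec_eq_iff adj_def kron_def sigma_plus_def
      sigma_minus_def mat2_of_def I2_def mat_def forall_2 prod_eq_iff)

lemma adj_sigma_m [simp]: "adj (sigma_m j) = sigma_p j"
  by (metis adj_adj adj_sigma_p)

lemma adj_W [simp]: "adj (W j) = W j"
  by (auto simp: W_def vec_eq_iff adj_def kron_def sigma_z_def mat2_of_def I2_def mat_def
      forall_2 prod_eq_iff)

lemma UNIV_2: "(UNIV :: 2 set) = {1, 2}"
  using exhaust_2 by auto

lemma sigma_anticommutator: "sigma_p j ** sigma_m j + sigma_m j ** sigma_p j = mat 1"
  by (auto simp: sigma_p_def sigma_m_def vec_eq_iff matrix_matrix_mult_def kron_def UNIV_2
      sigma_plus_def sigma_minus_def mat2_of_def I2_def mat_def forall_2 prod_eq_iff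
      UNIV_Times_UNIV[symmetric] sum.cartesian_product[symmetric])

lemma hermitian_Hc: "hermitian V \<Longrightarrow> adj (Hc \<epsilon> \<omega> \<Lambda> V c) = Hc \<epsilon> \<omega> \<Lambda> V c"
  by (cases c) (simp add: Hc_def H0_def hermitian_def)

lemma csmul_add: "csmul c (A + B) = csmul c A + csmul c B"
  by (simp add: csmul_def vec_eq_iff algebra_simps)

lemma csmul_scaleR: "csmul c (r *\<^sub>R A) = r *\<^sub>R csmul c A"
  by (simp add: csmul_def vec_eq_iff)

lemma csmul_mult_of_real: "csmul (c * of_real r) A = r *\<^sub>R csmul c A"
  by (simp add: csmul_def vec_eq_iff scaleR_conv_of_real[where 'a=complex])

lemma matrix_add_rdistrib: "((A + B) ** C :: mat4) = A ** C + B ** C"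
  by (simp add: vec_eq_iff matrix_matrix_mult_def algebra_simps sum.distrib)

lemma matrix_diff_ldistrib: "(C ** (A - B) :: mat4) = C ** A - C ** B"
  by (simp add: vec_eq_iff matrix_matrix_mult_def algebra_simps sum_subtractf)

lemma matrix_diff_rdistrib: "((A - B) ** C :: mat4) = A ** C - B ** C"
  by (simp add: vec_eq_iff matrix_matrix_mult_def algebra_simps sum_subtractf)

lemma matrix_csmul_left: "(csmul c A ** C :: mat4) = csmul c (A ** C)"
  by (simp add: vec_eq_iff matrix_matrix_mult_def csmul_def algebra_simps sum_distrib_left)

lemma matrix_csmul_right: "(C ** csmul c A :: mat4) = csmul c (C ** A)"
  by (simp add: vec_eq_iff matrix_matrix_mult_def csmul_def algebra_simps sum_distrib_left)

lemma comm_add_left: "comm (A + B) C = comm A C + comm B C"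
  by (simp add: comm_def matrix_add_rdistrib matrix_add_ldistrib)

lemma comm_scaleR_left: "comm (r *\<^sub>R A) C = r *\<^sub>R comm A C"
  by (simp add: comm_def scalar_matrix_assoc[symmetric] matrix_scalar_ac algebra_simps)

lemma acomm_add_left: "acomm (A + B) C = acomm A C + acomm B C"
  by (simp add: acomm_def matrix_add_rdistrib matrix_add_ldistrib)

lemma trace_scaleR: "trace (r *\<^sub>R A :: mat4) = of_real r * trace A"
  by (simp add: trace_def sum_distrib_left scaleR_conv_of_real[where 'a=complex])

lemma trace_csmul: "trace (csmul c A :: mat4) = c * trace A"
  by (simp add: trace_def csmul_def sum_distrib_left)

lemma hs_inner_add_right: "hs_inner X (A + B) = hs_inner X A + hs_inner X B"
  by (simp add: hs_inner_def matrix_add_ldistrib trace_add)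

lemma hs_inner_diff_right: "hs_inner X (A - B) = hs_inner X A - hs_inner X B"
  by (simp add: hs_inner_def matrix_diff_ldistrib trace_sub)

lemma hs_inner_scaleR_right: "hs_inner X (r *\<^sub>R A) = of_real r * hs_inner X A"
  by (simp add: hs_inner_def matrix_scalar_ac scalar_matrix_assoc[symmetric] trace_scaleR)

lemma hs_inner_csmul_right: "hs_inner X (csmul c A) = c * hs_inner X A"
  by (simp add: hs_inner_def matrix_csmul_right trace_csmul)

lemma hs_inner_add_left: "hs_inner (A + B) X = hs_inner A X + hs_inner B X"
  by (simp add: hs_inner_def matrix_add_rdistrib trace_add)

lemma hs_inner_diff_left: "hs_inner (A - B) X = hs_inner A X - hs_inner B X"
  by (simp add: hs_inner_def matrix_diff_rdistrib trace_sub)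

lemma hs_inner_scaleR_left: "hs_inner (r *\<^sub>R A) X = of_real r * hs_inner A X"
  by (simp add: hs_inner_def scalar_matrix_assoc[symmetric] trace_scaleR)

lemma hs_inner_csmul_left: "hs_inner (csmul c A) X = cnj c * hs_inner A X"
  by (simp add: hs_inner_def matrix_csmul_left trace_csmul)

lemma bounded_bilinear_Re_hs_inner: "bounded_bilinear (\<lambda>A B. Re (hs_inner A B))"
proof -
  have "bilinear (\<lambda>A B. Re (hs_inner A B))"
    by (auto simp: bilinear_def hs_inner_add_left hs_inner_add_right hs_inner_scaleR_left
        hs_inner_scaleR_right intro!: linearI)
  then show ?thesis
    by (simp add: bilinear_conv_bounded_bilinear)
qed

lemma hs_inner_mult_left: "hs_inner (P ** X) \<rho> = hs_inner X (adj P ** \<rho>)"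
  by (simp add: hs_inner_def matrix_mul_assoc)

lemma hs_inner_mult_right: "hs_inner (X ** Q) \<rho> = hs_inner X (\<rho> ** adj Q)"
  by (simp add: hs_inner_def) (metis matrix_mul_assoc trace_mul_sym)

lemma hs_inner_sandwich: "hs_inner (P ** X ** Q) \<rho> = hs_inner X (adj P ** \<rho> ** adj Q)"
  by (metis hs_inner_mult_left hs_inner_mult_right matrix_mul_assoc)

lemma hs_inner_comm_left: "adj H = H \<Longrightarrow> hs_inner (comm H X) \<rho> = hs_inner X (comm H \<rho>)"
  by (simp add: comm_def hs_inner_diff_left hs_inner_diff_right hs_inner_mult_left[of H X]
      hs_inner_mult_right[of X H])

lemma hs_inner_acomm_left: "adj H = H \<Longrightarrow> hs_inner (acomm H X) \<rho> = hs_inner X (acomm H \<rho>)"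
  by (simp add: acomm_def hs_inner_add_left hs_inner_add_right hs_inner_mult_left[of H X]
      hs_inner_mult_right[of X H])

lemma hs_inner_LD_adj: "hs_inner (LD_adj \<Omega> c X) \<rho> = hs_inner X (LD \<Omega> c \<rho>)"
  by (cases c) (simp add: LD_adj_def LD_def LD_adj_j_def LD_j_def hs_inner_add_left
      hs_inner_add_right hs_inner_diff_left hs_inner_diff_right hs_inner_scaleR_left
      hs_inner_scaleR_right hs_inner_sandwich hs_inner_acomm_left)

lemma hs_inner_adjoint_rhs:
  assumes "hermitian V"
  shows "hs_inner (adjoint_rhs \<epsilon> \<omega> \<Lambda> \<Omega> V c X) \<rho> = - hs_inner X (master_rhs \<epsilon> \<omega> \<Lambda> \<Omega> V c \<rho>)"
  using assms
  by (simp add: adjoint_rhs_def master_rhs_def hs_inner_diff_left hs_inner_scaleR_left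
      hs_inner_csmul_left hs_inner_comm_left hermitian_Hc hs_inner_add_right
      hs_inner_scaleR_right hs_inner_csmul_right hs_inner_LD_adj algebra_simps)

definition n_generator :: "real \<Rightarrow> (nat \<Rightarrow> real) \<Rightarrow> (nat \<Rightarrow> real) \<Rightarrow> nat \<Rightarrow> mat4 \<Rightarrow> mat4" where
  "n_generator \<epsilon> \<Lambda> \<Omega> j \<rho> = csmul (-\<i> * \<epsilon> * \<Lambda> j) (comm (W j) \<rho>)
     + (\<epsilon> * \<Omega> j) *\<^sub>R (2 *\<^sub>R (sigma_m j ** \<rho> ** sigma_p j) + 2 *\<^sub>R (sigma_p j ** \<rho> ** sigma_m j) - 2 *\<^sub>R \<rho>)"

lemma master_rhs_affine:
  "master_rhs \<epsilon> \<omega> \<Lambda> \<Omega> V (u, n1, n2) \<rho> = master_rhs \<epsilon> \<omega> \<Lambda> \<Omega> V (0, 0, 0) \<rho>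
     + u *\<^sub>R csmul (-\<i>) (comm V \<rho>) + n1 *\<^sub>R n_generator \<epsilon> \<Lambda> \<Omega> 1 \<rho> + n2 *\<^sub>R n_generator \<epsilon> \<Lambda> \<Omega> 2 \<rho>"
proof -
  \<comment> \<open>The anticommutator terms of the two halves of the dissipator combine to \<open>2\<rho>\<close>.\<close>
  have "acomm (mat 1) \<rho> = 2 *\<^sub>R \<rho>"
    by (simp add: acomm_def scaleR_2)
  then have two_rho: "2 *\<^sub>R \<rho> = acomm (sigma_p j ** sigma_m j) \<rho> + acomm (sigma_m j ** sigma_p j) \<rho>" for j
    by (simp add: acomm_add_left[symmetric] sigma_anticommutator)
  have n_generator: "n_generator \<epsilon> \<Lambda> \<Omega> j \<rho> = (\<epsilon> * \<Lambda> j) *\<^sub>R csmul (-\<i>) (comm (W j) \<rho>)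
      + (\<epsilon> * \<Omega> j) *\<^sub>R (2 *\<^sub>R (sigma_m j ** \<rho> ** sigma_p j) + 2 *\<^sub>R (sigma_p j ** \<rho> ** sigma_m j)
          - acomm (sigma_p j ** sigma_m j) \<rho> - acomm (sigma_m j ** sigma_p j) \<rho>)" for j
    unfolding n_generator_def two_rho[of j] csmul_mult_of_real[symmetric]
    by (simp add: algebra_simps)
  show ?thesis
    unfolding n_generator
    by (simp add: master_rhs_def Hc_def LD_def LD_j_def comm_add_left comm_scaleR_left csmul_add
        csmul_scaleR del: One_nat_def) (simp add: algebra_simps)
qed

lemma K_n_eq_n_generator: "K_n \<epsilon> \<Lambda> \<Omega> j X \<rho> = Re (hs_inner X (n_generator \<epsilon> \<Lambda> \<Omega> j \<rho>))"
  by (simp add: K_n_def n_generator_def)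

lemma Re_hs_inner_master_rhs_increment:
  "Re (hs_inner X (master_rhs \<epsilon> \<omega> \<Lambda> \<Omega> V d \<rho>)) - Re (hs_inner X (master_rhs \<epsilon> \<omega> \<Lambda> \<Omega> V c \<rho>))
     = K_c \<epsilon> \<Lambda> \<Omega> V X \<rho> \<bullet> (d - c)"
proof -
  obtain u n1 n2 where c: "c = (u, n1, n2)"
    by (cases c) auto
  obtain u' n1' n2' where d: "d = (u', n1', n2')"
    by (cases d) auto
  show ?thesis
    unfolding c d master_rhs_affine[of \<epsilon> \<omega> \<Lambda> \<Omega> V u] master_rhs_affine[of \<epsilon> \<omega> \<Lambda> \<Omega> V u']
    by (simp add: K_c_def K_u_def K_n_eq_n_generator hs_inner_add_right hs_inner_scaleR_right
        algebra_simps)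
qed

lemma Re_hs_inner_has_vector_derivative:
  assumes "hermitian V"
    and "(\<rho> has_vector_derivative master_rhs \<epsilon> \<omega> \<Lambda> \<Omega> V d (\<rho> t)) (at t within S)"
    and "(X has_vector_derivative adjoint_rhs \<epsilon> \<omega> \<Lambda> \<Omega> V c (X t)) (at t within S)"
  shows "((\<lambda>t. Re (hs_inner (X t) (\<rho> t))) has_vector_derivative K_c \<epsilon> \<Lambda> \<Omega> V (X t) (\<rho> t) \<bullet> (d - c))
           (at t within S)"
proof -
  have "Re (hs_inner (X t) (master_rhs \<epsilon> \<omega> \<Lambda> \<Omega> V d (\<rho> t)))
        + Re (hs_inner (adjoint_rhs \<epsilon> \<omega> \<Lambda> \<Omega> V c (X t)) (\<rho> t))
      = K_c \<epsilon> \<Lambda> \<Omega> V (X t) (\<rho> t) \<bullet> (d - c)"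
    using Re_hs_inner_master_rhs_increment hs_inner_adjoint_rhs[OF assms(1)] by simp
  with bounded_bilinear.has_vector_derivative[OF bounded_bilinear_Re_hs_inner assms(3,2)]
  show ?thesis
    by simp
qed

lemma Re_hs_inner_solutions_has_vector_derivative:
  assumes "hermitian V"
    and "master_solution \<epsilon> \<omega> \<Lambda> \<Omega> V T \<rho>0 d \<rho>"
    and "adjoint_solution \<epsilon> \<omega> \<Lambda> \<Omega> V T \<rho>target c X"
  obtains S where "finite S" and "continuous_on {0..T} (\<lambda>t. Re (hs_inner (X t) (\<rho> t)))"
    and "\<And>t. t \<in> {0..T} - S \<Longrightarrow> ((\<lambda>t. Re (hs_inner (X t) (\<rho> t)))
           has_vector_derivative K_c \<epsilon> \<Lambda> \<Omega> V (X t) (\<rho> t) \<bullet> (d t - c t)) (at t within {0..T})"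
proof -
  obtain S1 where "finite S1" and "continuous_on {0..T} \<rho>"
    and \<rho>': "\<And>t. t \<in> {0..T} - S1 \<Longrightarrow>
           (\<rho> has_vector_derivative master_rhs \<epsilon> \<omega> \<Lambda> \<Omega> V (d t) (\<rho> t)) (at t within {0..T})"
    using assms(2) unfolding master_solution_def by blast
  moreover obtain S2 where "finite S2" and "continuous_on {0..T} X"
    and X': "\<And>t. t \<in> {0..T} - S2 \<Longrightarrow>
           (X has_vector_derivative adjoint_rhs \<epsilon> \<omega> \<Lambda> \<Omega> V (c t) (X t)) (at t within {0..T})"
    using assms(3) unfolding adjoint_solution_def by blast
  ultimately show thesis
    using that[of "S1 \<union> S2"] bounded_bilinear.continuous_on[OF bounded_bilinear_Re_hs_inner]
      Re_hs_inner_has_vector_derivative[OF assms(1) \<rho>' X']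
    by blast
qed

lemma Re_hs_inner_conserved:
  assumes "hermitian V" "0 \<le> T"
    and "master_solution \<epsilon> \<omega> \<Lambda> \<Omega> V T \<rho>0 c \<rho>"
    and "adjoint_solution \<epsilon> \<omega> \<Lambda> \<Omega> V T \<rho>target c X"
  shows "Re (hs_inner (X T) (\<rho> T)) = Re (hs_inner (X 0) (\<rho> 0))"
proof (rule Re_hs_inner_solutions_has_vector_derivative[OF assms(1,3,4)])
  fix S
  assume "finite S" "continuous_on {0..T} (\<lambda>t. Re (hs_inner (X t) (\<rho> t)))"
    and "\<And>t. t \<in> {0..T} - S \<Longrightarrow> ((\<lambda>t. Re (hs_inner (X t) (\<rho> t)))
           has_vector_derivative K_c \<epsilon> \<Lambda> \<Omega> V (X t) (\<rho> t) \<bullet> (c t - c t)) (at t within {0..T})"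
  from has_integral_derivative_cofinite[OF this(1) assms(2) this(2,3)] show ?thesis
    by simp
qed

lemma J1_eq_Re_hs_inner: "hermitian \<rho>target \<Longrightarrow> J1 T \<rho>target \<rho> = Re (hs_inner \<rho>target (\<rho> T))"
  unfolding J1_def hs_inner_def hermitian_def by (metis trace_mul_sym)

lemma J1_increment_eq_Re_hs_inner_increment:
  assumes "hermitian V" "0 \<le> T" "density_matrix \<rho>target"
    and "master_solution \<epsilon> \<omega> \<Lambda> \<Omega> V T \<rho>0 c \<rho>"
    and "adjoint_solution \<epsilon> \<omega> \<Lambda> \<Omega> V T \<rho>target c X"
    and "master_solution \<epsilon> \<omega> \<Lambda> \<Omega> V T \<rho>0 c' \<rho>'"
  shows "J1 T \<rho>target \<rho>' - J1 T \<rho>target \<rho> = Re (hs_inner (X T) (\<rho>' T)) - Re (hs_inner (X 0) (\<rho>' 0))"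
proof -
  have "hermitian \<rho>target" "\<rho> 0 = \<rho>0" "\<rho>' 0 = \<rho>0" "X T = \<rho>target"
    using assms(3-6)
    by (simp_all add: density_matrix_def psd_def master_solution_def adjoint_solution_def)
  then show ?thesis
    using Re_hs_inner_conserved[OF assms(1,2,4,5)] by (simp add: J1_eq_Re_hs_inner)
qed

lemma K_c_inner_diff:
  "K_c \<epsilon> \<Lambda> \<Omega> V X \<rho> \<bullet> (d - c) = K_u V X \<rho> * (fst d - fst c)
     + K_n \<epsilon> \<Lambda> \<Omega> 1 X \<rho> * (fst (snd d) - fst (snd c)) + K_n \<epsilon> \<Lambda> \<Omega> 2 X \<rho> * (snd (snd d) - snd (snd c))"
  by (cases c; cases d) (simp add: K_c_def)

lemma switching_gains_nonneg:
  assumes "c \<in> control_set \<mu> nmax"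
    and "is_arg_max (\<lambda>v. K_u V X \<rho> * v) (\<lambda>v. \<bar>v\<bar> \<le> \<mu>) (fst d)"
    and "is_arg_max (\<lambda>v. K_n \<epsilon> \<Lambda> \<Omega> 1 X \<rho> * v) (\<lambda>v. v \<in> {0..nmax}) (fst (snd d))"
    and "is_arg_max (\<lambda>v. K_n \<epsilon> \<Lambda> \<Omega> 2 X \<rho> * v) (\<lambda>v. v \<in> {0..nmax}) (snd (snd d))"
  shows "0 \<le> K_u V X \<rho> * (fst d - fst c)"
    and "0 \<le> K_n \<epsilon> \<Lambda> \<Omega> 1 X \<rho> * (fst (snd d) - fst (snd c))"
    and "0 \<le> K_n \<epsilon> \<Lambda> \<Omega> 2 X \<rho> * (snd (snd d) - snd (snd c))"
proof -
  have "\<bar>fst c\<bar> \<le> \<mu>" "fst (snd c) \<in> {0..nmax}" "snd (snd c) \<in> {0..nmax}"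
    using assms(1) by (auto simp: control_set_def mem_Times_iff)
  then show "0 \<le> K_u V X \<rho> * (fst d - fst c)"
    and "0 \<le> K_n \<epsilon> \<Lambda> \<Omega> 1 X \<rho> * (fst (snd d) - fst (snd c))"
    and "0 \<le> K_n \<epsilon> \<Lambda> \<Omega> 2 X \<rho> * (snd (snd d) - snd (snd c))"
    using assms(2-4) by (simp_all add: is_arg_max_linear_gain)
qed

theorem proposition1:
  fixes \<epsilon> T \<mu> nmax :: real
    and \<omega> \<Lambda> \<Omega> :: "nat \<Rightarrow> real"
    and V \<rho>0 \<rho>target :: mat4
    and ck ck1 :: "real \<Rightarrow> real \<times> real \<times> real"
    and \<rho>k \<rho>k1 Xk :: "real \<Rightarrow> mat4"
  assumes params: "\<epsilon> > 0" "\<forall>j\<in>{1,2}. \<omega> j > 0 \<and> \<Lambda> j > 0 \<and> \<Omega> j > 0"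
      and T: "T > 0" and mu: "\<mu> > 0" and nmax: "nmax > 0"
      and V: "hermitian V"
      and rho0: "density_matrix \<rho>0" and target: "density_matrix \<rho>target"
      and adm_k: "admissible T \<mu> nmax ck"
      and sol_k: "master_solution \<epsilon> \<omega> \<Lambda> \<Omega> V T \<rho>0 ck \<rho>k"
      and adj_k: "adjoint_solution \<epsilon> \<omega> \<Lambda> \<Omega> V T \<rho>target ck Xk"
      and adm_k1: "admissible T \<mu> nmax ck1"
      and sol_k1: "master_solution \<epsilon> \<omega> \<Lambda> \<Omega> V T \<rho>0 ck1 \<rho>k1"
      and argmax_u: "\<forall>t\<in>{0..T}. is_arg_max (\<lambda>v. K_u V (Xk t) (\<rho>k1 t) * v)
                                  (\<lambda>v. \<bar>v\<bar> \<le> \<mu>) (fst (ck1 t))"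
      and argmax_n1: "\<forall>t\<in>{0..T}. is_arg_max (\<lambda>v. K_n \<epsilon> \<Lambda> \<Omega> 1 (Xk t) (\<rho>k1 t) * v)
                                  (\<lambda>v. v \<in> {0..nmax}) (fst (snd (ck1 t)))"
      and argmax_n2: "\<forall>t\<in>{0..T}. is_arg_max (\<lambda>v. K_n \<epsilon> \<Lambda> \<Omega> 2 (Xk t) (\<rho>k1 t) * v)
                                  (\<lambda>v. v \<in> {0..nmax}) (snd (snd (ck1 t)))"
  shows "(\<forall>t\<in>{0..T}. K_c \<epsilon> \<Lambda> \<Omega> V (Xk t) (\<rho>k1 t) \<bullet> (ck1 t - ck t) \<ge> 0)
       \<and> J1 T \<rho>target \<rho>k1 \<ge> J1 T \<rho>target \<rho>k
       \<and> ((emeasure lebesgue {t\<in>{0..T}. fst (ck1 t) \<noteq> fst (ck t)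
                                  \<and> K_u V (Xk t) (\<rho>k1 t) \<noteq> 0} > 0
           \<or> emeasure lebesgue {t\<in>{0..T}. fst (snd (ck1 t)) \<noteq> fst (snd (ck t))
                                  \<and> K_n \<epsilon> \<Lambda> \<Omega> 1 (Xk t) (\<rho>k1 t) \<noteq> 0} > 0
           \<or> emeasure lebesgue {t\<in>{0..T}. snd (snd (ck1 t)) \<noteq> snd (snd (ck t))
                                  \<and> K_n \<epsilon> \<Lambda> \<Omega> 2 (Xk t) (\<rho>k1 t) \<noteq> 0} > 0)
          \<longrightarrow> J1 T \<rho>target \<rho>k1 > J1 T \<rho>target \<rho>k)"
proof -
  let ?F = "\<lambda>t. Re (hs_inner (Xk t) (\<rho>k1 t))"
  let ?gu = "\<lambda>t. K_u V (Xk t) (\<rho>k1 t) * (fst (ck1 t) - fst (ck t))"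
  let ?g1 = "\<lambda>t. K_n \<epsilon> \<Lambda> \<Omega> 1 (Xk t) (\<rho>k1 t) * (fst (snd (ck1 t)) - fst (snd (ck t)))"
  let ?g2 = "\<lambda>t. K_n \<epsilon> \<Lambda> \<Omega> 2 (Xk t) (\<rho>k1 t) * (snd (snd (ck1 t)) - snd (snd (ck t)))"
  have gains: "0 \<le> ?gu t" "0 \<le> ?g1 t" "0 \<le> ?g2 t" if t: "t \<in> {0..T}" for t
    using switching_gains_nonneg[OF _ argmax_u[rule_format, OF t] argmax_n1[rule_format, OF t]
        argmax_n2[rule_format, OF t]] adm_k t
    by (auto simp: admissible_def)
  obtain S where S: "finite S" and F_cont: "continuous_on {0..T} ?F"
    and F_deriv: "\<And>t. t \<in> {0..T} - S \<Longrightarrow>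
           (?F has_vector_derivative ?gu t + ?g1 t + ?g2 t) (at t within {0..T})"
    by (rule Re_hs_inner_solutions_has_vector_derivative[OF V sol_k1 adj_k, unfolded K_c_inner_diff])
      (rule that)
  note J1_gain = J1_increment_eq_Re_hs_inner_increment[OF V less_imp_le[OF T] target sol_k adj_k sol_k1]
  have gain: "0 \<le> ?gu t + ?g1 t + ?g2 t" if "t \<in> {0..T} - S" for t
    using gains that by (meson DiffD1 add_nonneg_nonneg)
  note increment = derivative_nonneg_cofinite_increment[OF S T F_cont F_deriv gain]
  show ?thesis (is "_ \<and> _ \<and> (?switched \<longrightarrow> _)")
  proof (intro conjI impI)
    show "\<forall>t\<in>{0..T}. K_c \<epsilon> \<Lambda> \<Omega> V (Xk t) (\<rho>k1 t) \<bullet> (ck1 t - ck t) \<ge> 0"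
      using gains by (simp add: K_c_inner_diff)
    show "J1 T \<rho>target \<rho>k1 \<ge> J1 T \<rho>target \<rho>k"
      using J1_gain increment(1) by linarith
  next
    assume ?switched
    show "J1 T \<rho>target \<rho>k1 > J1 T \<rho>target \<rho>k"
    proof (rule ccontr)
      assume "\<not> ?thesis"
      with J1_gain increment(1) have "?F 0 = ?F T"
        by linarith
      with increment(2) gains have zero: "?gu t = 0" "?g1 t = 0" "?g2 t = 0" if "t \<in> {0..T} - S" for t
        using that by (smt (verit) DiffD1)+
      with \<open>?switched\<close> show False
        using emeasure_lebesgue_nonvanishing_product[OF S, where A="{0..T}", OF zero(1)]
          emeasure_lebesgue_nonvanishing_product[OF S, where A="{0..T}", OF zero(2)]
          emeasure_lebesgue_nonvanishing_product[OF S, where A="{0..T}", OF zero(3)] by simp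
    qed
  qed
qed

end
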